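(* For every $n\ge 1$, the number $a_n$ of topologically distinct endstates of Planted Brussels Sprouts whose initial state has $n$ arms is \[a_n=\frac{1}{2n-1}\binom{3n-3}{n-1}.\]
   Context: Planted Brussels Sprouts of order $n$: start with a closed disk with $n$ marked points on its boundary circle, labeled $1,\dots,n$ in clockwise order. Attached to each marked point is an arm, a short segment pointing into the interior of the disk; these arms are free. A move consists of two steps. First, choose two free arms and join their free ends by a simple curve (an arc) in the disk that does not intersect any previously drawn arc or arm; the two joined arms cease to be free. Second, mark a point (a notch) on the arc, from which two new free arms emanate, one on each side of the arc. The game ends when no move is possible, and the final configuration is called an endstate. Long labels: the original arm at point $i$ has long label $i$. If an arc joins arms with long labels $\alpha$ and $\beta$, the two new arms receive long labels $(\alpha,\beta)$ and $(\beta,\alpha)$, placed so that, going clockwise around the notch, one sees the old arm $\alpha$, the new arm $(\alpha,\beta)$, the old arm $\beta$, and the new arm $(\beta,\alpha)$. Two endstates are topologically equivalent (counted once) iff some homeomorphism of the disk carries one to the other preserving long labels; equivalently, iff they have the same set of long labels. *)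

theory Defs
  imports Complex_Main
begin

text \<open>Long labels: an original arm carries a point label i; an arm created by joining
arms with long labels a and b carries the long label (a,b).\<close>
datatype lbl = Pt nat | Pr lbl lbl

text \<open>Every region (face) of the disk cut by the
drawn arcs is a topological disk (everything drawn is connected to the boundary circle),
so a region is determined, for the purpose of future moves, by the cyclic sequence of the
free arms on its boundary, listed in clockwise order (boundary traversed with the region
on the right). A position is a list of regions (each a list of free arms, up to rotation)
together with the set of all long labels of arms created so far.

A move joins two distinct free arms a = R!i and b = R!j (i < j) in the same region R.
The arc splits R into the part X (arms strictly clockwise-between a and b) and the part
Y (arms strictly clockwise-between b and a). Going clockwise around the notch one sees
a, (a,b), b, (b,a); hence the new arm (a,b) lies in the X-part and (b,a) in the Y-part.\<close>

inductive pbs_reach :: "nat \<Rightarrow> lbl list list \<Rightarrow> lbl set \<Rightarrow> bool" for n :: nat where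
  init: "pbs_reach n [map Pt [1..<n+1]] (Pt ` {1..n})"
| move: "\<lbrakk> pbs_reach n rs L; R \<in> set rs; i < j; j < length R \<rbrakk> \<Longrightarrow>
          pbs_reach n
            (remove1 R rs @
              [ take (j - Suc i) (drop (Suc i) R) @ [Pr (R!i) (R!j)],
                drop (Suc j) R @ take i R @ [Pr (R!j) (R!i)] ])
            (L \<union> {Pr (R!i) (R!j), Pr (R!j) (R!i)})"

definition pbs_endstate :: "nat \<Rightarrow> lbl list list \<Rightarrow> lbl set \<Rightarrow> bool" where
  "pbs_endstate n rs L \<longleftrightarrow> pbs_reach n rs L \<and> (\<forall>R \<in> set rs. length R \<le> 1)"

text \<open>Number of topologically distinct endstates: endstates are identified iff they
have the same set of long labels.\<close>
definition pbs_count :: "nat \<Rightarrow> nat" where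
  "pbs_count n = card {L. \<exists>rs. pbs_endstate n rs L}"

end

theory Submission
  imports Defs "HOL-Computational_Algebra.Formal_Power_Series"
begin

text \<open>An endstate is determined by the labels created inside the initial region, so
  \<^term>\<open>pbs_count n\<close> counts the possible outcomes of playing a region with \<open>n\<close> arms to the end.
  In such an outcome of a region \<open>r # Q\<close>, the arc leaving the first arm \<open>r\<close> ends at an arm
  \<open>x\<close> into which a contiguous block of \<open>Q\<close> has been merged, and the arms on either side of the
  block are finished in the two regions bounded by that arc. A merged block splits in the same
  way into two merged sub-blocks and a finished middle region. Since no initial label occurs
  inside another, the created labels determine these decompositions. Hence outcomes of regions
  with \<open>m + 1\<close> arms and merges of blocks of \<open>m + 1\<close> arms are both counted by the ternary
  numbers \<open>T (m + 1) = (\<Sum>a + b \<le> m. T a * T b * T (m - a - b))\<close>. Their generating function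
  satisfies \<open>T = 1 + X * T ^ 3\<close>, the coefficients of its powers are given by Lagrange inversion,
  and \<open>pbs_count n = T (n - 1) = (3n - 3 choose n - 1) / (2n - 1)\<close>.\<close>

section \<open>Ternary numbers\<close>

fun ternary :: "nat \<Rightarrow> nat" where
  "ternary 0 = 1"
| "ternary (Suc m) = (\<Sum>a=0..m. \<Sum>b=0..m-a. ternary a * ternary b * ternary (m-a-b))"

lemma ternary_pos: "ternary m > 0"
proof (induction m)
  case (Suc m)
  have "ternary 0 * ternary 0 * ternary m \<le> (\<Sum>b=0..m. ternary 0 * ternary b * ternary (m-b))"
    using member_le_sum[of 0 "{0..m}" "\<lambda>b. ternary 0 * ternary b * ternary (m-b)"] by simp
  also have "\<dots> \<le> ternary (Suc m)"
    using member_le_sum[of 0 "{0..m}" "\<lambda>a. \<Sum>b=0..m-a. ternary a * ternary b * ternary (m-a-b)"]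
    by simp
  finally show ?case using Suc by simp
qed simp

text \<open>The coefficient of \<open>X ^ m\<close> in the \<open>j\<close>-th power of the ternary generating function;
  \<open>m = 0\<close> is treated separately because the formula degenerates to \<open>0 / 0\<close> for \<open>j = 0\<close>.\<close>

definition ternary_power_coeff :: "nat \<Rightarrow> nat \<Rightarrow> real" where
  "ternary_power_coeff j m =
     (if m = 0 then 1 else real j * real ((3*m+j) choose m) / real (3*m+j))"

lemma ternary_power_coeff_pos_index:
  "0 < j \<Longrightarrow> ternary_power_coeff j m = real j * real ((3*m+j) choose m) / real (3*m+j)"
  by (simp add: ternary_power_coeff_def)

lemma ternary_power_coeff_rec:
  "ternary_power_coeff (Suc j) (Suc m) = ternary_power_coeff j (Suc m) + ternary_power_coeff (j+3) m"
proof -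
  define N where "N = 3*m + j + 3"
  define c where "c = real (N choose m)"
  have N_pos: "real N > 0"
    by (simp add: N_def)
  have "real (Suc m) * real (Suc N choose Suc m) = real (Suc N) * c"
    unfolding c_def by (metis Suc_times_binomial of_nat_mult)
  then have up: "real (Suc N choose Suc m) = real (Suc N) * c / real (Suc m)"
    by (simp add: field_simps del: binomial_Suc_Suc)
  have "Suc m * (N choose Suc m) = (N - m) * (N choose m)"
    by (simp only: binomial_absorption binomial_absorb_comp)
  then have "real (Suc m) * real (N choose Suc m) = real (N - m) * c"
    unfolding c_def by (metis of_nat_mult)
  then have down: "real (N choose Suc m) = (real N - real m) * c / real (Suc m)"
    by (simp add: N_def of_nat_diff field_simps)
  have key: "real j * (real N - real m) + (real j + 3) * (real m + 1) = (real j + 1) * real N"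
    by (simp add: N_def algebra_simps)
  have "3 * Suc m + Suc j = Suc N" "3 * Suc m + j = N" "3 * m + (j + 3) = N"
    by (simp_all add: N_def)
  then have lhs: "ternary_power_coeff (Suc j) (Suc m) = real (Suc j) * real (Suc N choose Suc m) / real (Suc N)"
    and rhs: "ternary_power_coeff j (Suc m) = real j * real (N choose Suc m) / real N"
      "ternary_power_coeff (j+3) m = (real j + 3) * c / real N"
    by (simp_all only: ternary_power_coeff_pos_index ternary_power_coeff_def c_def) simp_all
  have "ternary_power_coeff (Suc j) (Suc m) = (real j * (real N - real m) + (real j + 3) * (real m + 1)) * c
      / ((real m + 1) * real N)"
    unfolding lhs key using N_pos by (simp add: up add.commute del: binomial_Suc_Suc)
  also have "\<dots> = ternary_power_coeff j (Suc m) + ternary_power_coeff (j+3) m"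
    unfolding rhs down using N_pos by (simp add: divide_simps) (simp add: algebra_simps)
  finally show ?thesis .
qed

definition ternary_fps :: "real fps" where
  "ternary_fps = Abs_fps (\<lambda>n. real (ternary n))"

lemma ternary_fps_eq: "ternary_fps = 1 + fps_X * ternary_fps ^ 3"
proof (rule fps_ext)
  fix n
  show "fps_nth ternary_fps n = fps_nth (1 + fps_X * ternary_fps ^ 3) n"
  proof (cases n)
    case (Suc m)
    have "fps_nth (ternary_fps ^ 3) m = fps_nth (ternary_fps * (ternary_fps * ternary_fps)) m"
      by (simp add: power3_eq_cube mult.assoc)
    also have "\<dots> = (\<Sum>a=0..m. real (ternary a) * (\<Sum>b=0..m-a. real (ternary b) * real (ternary (m-a-b))))"
      by (simp add: fps_mult_nth ternary_fps_def diff_diff_add)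
    also have "\<dots> = real (ternary (Suc m))"
      by (simp add: sum_distrib_left mult.assoc)
    finally show ?thesis
      using Suc by (simp add: ternary_fps_def)
  qed (simp add: ternary_fps_def)
qed

lemma fps_nth_ternary_fps_power: "fps_nth (ternary_fps ^ j) m = ternary_power_coeff j m"
proof (induction m arbitrary: j)
  case 0
  then show ?case
    by (simp add: fps_power_zeroth ternary_fps_def ternary_power_coeff_def)
next
  case (Suc m)
  have step: "fps_nth (ternary_fps ^ Suc j) (Suc m)
      = fps_nth (ternary_fps ^ j) (Suc m) + fps_nth (ternary_fps ^ (j + 3)) m" for j
  proof -
    have "ternary_fps ^ Suc j = ternary_fps ^ j * (1 + fps_X * ternary_fps ^ 3)"
      by (metis ternary_fps_eq power_Suc2)
    then show ?thesis
      by (simp add: algebra_simps power_add)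
  qed
  note coeff_m = Suc.IH
  show ?case
  proof (induction j)
    case (Suc j)
    then show ?case
      using step coeff_m ternary_power_coeff_rec by simp
  qed (simp add: ternary_power_coeff_def)
qed

lemma ternary_closed_form: "real (ternary m) = real ((3*m) choose m) / real (2*m+1)"
proof -
  have "real (ternary m) = real ((3*m+1) choose m) / real (3*m+1)"
    using fps_nth_ternary_fps_power[of 1 m] by (simp add: ternary_fps_def ternary_power_coeff_def)
  also have "\<dots> = real ((3*m) choose m) / real (2*m+1)"
  proof -
    have "real (Suc (3*m) - m) * real (Suc (3*m) choose m) = real (Suc (3*m)) * real ((3*m) choose m)"
      by (metis binomial_absorb_comp diff_Suc_1 of_nat_mult)
    moreover have "Suc (3*m) - m = 2*m+1" by simp
    ultimately show ?thesis by (simp add: field_simps)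
  qed
  finally show ?thesis .
qed

section \<open>Outcomes of a region\<close>

text \<open>\<^term>\<open>outcome R A\<close>: the region whose free arms are \<open>R\<close> can be played to the end creating
  exactly the labels \<open>A\<close>. The join rule is the move of \<^const>\<open>pbs_reach\<close> followed by playing
  both new regions to the end.\<close>

inductive outcome :: "lbl list \<Rightarrow> lbl set \<Rightarrow> bool" where
  outcome_stop: "length R \<le> 1 \<Longrightarrow> outcome R {}"
| outcome_join: "outcome (M @ [Pr a b]) A \<Longrightarrow> outcome (P' @ P @ [Pr b a]) B \<Longrightarrow>
    outcome (P @ a # M @ b # P') ({Pr a b, Pr b a} \<union> A \<union> B)"

lemma outcome_rotate1:
  assumes "outcome (u # V) C"
  shows "outcome (V @ [u]) C"
  using assms
proof (cases rule: outcome.cases)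
  case outcome_stop
  then show ?thesis by (auto intro: outcome.outcome_stop)
next
  case (outcome_join M a b A P' P B)
  show ?thesis
  proof (cases P)
    case Nil
    then have "outcome (M @ b # P' @ [a]) ({Pr b a, Pr a b} \<union> B \<union> A)"
      using outcome.outcome_join[of P' b a B "[]" M A] outcome_join by simp
    then show ?thesis
      using outcome_join Nil by (simp add: insert_commute Un_ac)
  next
    case (Cons p P0)
    then show ?thesis
      using outcome.outcome_join[of M a b A "P' @ [u]" P0 B] outcome_join by simp
  qed
qed

lemma outcome_rotate: "outcome (U @ V) C \<Longrightarrow> outcome (V @ U) C"
proof (induction U arbitrary: V)
  case (Cons u U)
  then have "outcome (U @ V @ [u]) C"
    using outcome_rotate1[of u "U @ V"] by simp
  then show ?case
    using Cons.IH by fastforce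
qed simp

lemma outcome_join_rotated:
  assumes "outcome (P @ Pr b a # P') C" and "outcome (M @ [Pr a b]) D"
  shows "outcome (P @ a # M @ b # P') ({Pr a b, Pr b a} \<union> D \<union> C)"
  using outcome_join[OF assms(2)] outcome_rotate[of "P @ [Pr b a]" P' C] assms(1) by simp

text \<open>\<^term>\<open>merge Q x S\<close>: the consecutive arms \<open>Q\<close> can be played down to the single free arm
  \<open>x\<close>, the moves involved creating the labels \<open>S\<close>.\<close>

inductive merge :: "lbl list \<Rightarrow> lbl \<Rightarrow> lbl set \<Rightarrow> bool" where
  merge_single: "merge [z] z {}"
| merge_join: "merge Qa xa Sa \<Longrightarrow> merge Qb xb Sb \<Longrightarrow> outcome (Qm @ [Pr xa xb]) Sm \<Longrightarrow>
    merge (Qa @ Qm @ Qb) (Pr xb xa) ({Pr xa xb, Pr xb xa} \<union> Sa \<union> Sb \<union> Sm)"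

lemma outcome_merge:
  "merge Qx x S \<Longrightarrow> outcome (P @ x # P') C \<Longrightarrow> outcome (P @ Qx @ P') (S \<union> C)"
proof (induction arbitrary: P P' C rule: merge.induct)
  case (merge_join Qa xa Sa Qb xb Sb Qm Sm)
  have "outcome (P @ xa # Qm @ xb # P') ({Pr xa xb, Pr xb xa} \<union> Sm \<union> C)"
    using outcome_join_rotated[OF merge_join.prems merge_join.hyps(3)] .
  then have "outcome (P @ Qa @ Qm @ xb # P') (Sa \<union> ({Pr xa xb, Pr xb xa} \<union> Sm \<union> C))"
    by (rule merge_join.IH(1))
  then have "outcome (P @ Qa @ Qm @ Qb @ P') (Sb \<union> (Sa \<union> ({Pr xa xb, Pr xb xa} \<union> Sm \<union> C)))"
    by (rule merge_join.IH(2)[of "P @ Qa @ Qm", simplified])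
  then show ?case
    by (simp add: Un_ac insert_commute)
qed simp

lemma Cons_eq_append3_cases:
  assumes "U @ y # V = A @ B @ C"
  obtains (left) A' where "A = U @ y # A'" "V = A' @ B @ C"
  | (middle) B1 B2 where "B = B1 @ y # B2" "U = A @ B1" "V = B2 @ C"
  | (right) C1 where "C = C1 @ y # V" "U = A @ B @ C1"
  using assms
  by (auto simp: append_eq_append_conv2 Cons_eq_append_conv append_eq_Cons_conv)

lemma merge_expand:
  "merge Q x S \<Longrightarrow> Q = U @ Pr b a # V \<Longrightarrow> outcome (M @ [Pr a b]) D \<Longrightarrow>
   merge (U @ a # M @ b # V) x ({Pr a b, Pr b a} \<union> D \<union> S)"
proof (induction arbitrary: U V rule: merge.induct)
  case (merge_single z)
  then have "U = []" "V = []" "z = Pr b a"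
    by (auto simp: Cons_eq_append_conv)
  with merge.merge_join[OF merge.merge_single merge.merge_single merge_single.prems(2)]
  show ?case by simp
next
  case (merge_join Qa xa Sa Qb xb Sb Qm Sm)
  from merge_join.prems(1)[symmetric] show ?case
  proof (cases rule: Cons_eq_append3_cases)
    case (left A')
    with merge_join.IH(1) merge_join.prems(2)
    have "merge (U @ a # M @ b # A') xa ({Pr a b, Pr b a} \<union> D \<union> Sa)" by blast
    from merge.merge_join[OF this merge_join.hyps(2,3)] show ?thesis
      using left by (simp add: Un_ac insert_commute)
  next
    case (middle B1 B2)
    with merge_join.hyps(3)
    have "outcome (B1 @ Pr b a # B2 @ [Pr xa xb]) Sm" by simp
    from outcome_join_rotated[OF this merge_join.prems(2)]
    have "outcome ((B1 @ a # M @ b # B2) @ [Pr xa xb]) ({Pr a b, Pr b a} \<union> D \<union> Sm)" by simp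
    from merge.merge_join[OF merge_join.hyps(1,2) this] show ?thesis
      using middle by (simp add: Un_ac insert_commute)
  next
    case (right C1)
    with merge_join.IH(2) merge_join.prems(2)
    have "merge (C1 @ a # M @ b # V) xb ({Pr a b, Pr b a} \<union> D \<union> Sb)" by blast
    from merge.merge_join[OF merge_join.hyps(1) this merge_join.hyps(3)] show ?thesis
      using right by (simp add: Un_ac insert_commute)
  qed
qed

definition first_arm_split :: "lbl \<Rightarrow> lbl list \<Rightarrow> lbl set \<Rightarrow> bool" where
  "first_arm_split r Q A \<longleftrightarrow> (\<exists>Q1 Qx Q2 x Sx A1 A2. Q = Q1 @ Qx @ Q2 \<and> merge Qx x Sx \<and>
     outcome (Q1 @ [Pr r x]) A1 \<and> outcome (Q2 @ [Pr x r]) A2 \<and>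
     A = {Pr r x, Pr x r} \<union> Sx \<union> A1 \<union> A2)"

lemma first_arm_splitI:
  "Q = Q1 @ Qx @ Q2 \<Longrightarrow> merge Qx x Sx \<Longrightarrow> outcome (Q1 @ [Pr r x]) A1 \<Longrightarrow>
   outcome (Q2 @ [Pr x r]) A2 \<Longrightarrow> A = {Pr r x, Pr x r} \<union> Sx \<union> A1 \<union> A2 \<Longrightarrow>
   first_arm_split r Q A"
  unfolding first_arm_split_def by blast

lemma first_arm_split_imp_outcome:
  assumes "first_arm_split r Q A"
  shows "outcome (r # Q) A"
proof -
  from assms obtain Q1 Qx Q2 x Sx A1 A2 where Q: "Q = Q1 @ Qx @ Q2" and Qx: "merge Qx x Sx"
    and A1: "outcome (Q1 @ [Pr r x]) A1" and A2: "outcome (Q2 @ [Pr x r]) A2"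
    and A: "A = {Pr r x, Pr x r} \<union> Sx \<union> A1 \<union> A2"
    unfolding first_arm_split_def by blast
  have "outcome ([] @ r # Q1 @ x # Q2) ({Pr r x, Pr x r} \<union> A1 \<union> A2)"
    using outcome_join[OF A1, of Q2 "[]"] A2 by simp
  from outcome_merge[OF Qx, of "r # Q1" Q2, simplified, OF this[simplified]] show ?thesis
    using Q A by (simp add: Un_ac)
qed

lemma first_arm_split_expand:
  assumes split: "first_arm_split r (P @ Pr b a # P') A" and AX: "outcome (M @ [Pr a b]) AX"
  shows "first_arm_split r (P @ a # M @ b # P') ({Pr a b, Pr b a} \<union> AX \<union> A)"
proof -
  obtain Q1 Qx Q2 x Sx A1 A2 where eq: "P @ Pr b a # P' = Q1 @ Qx @ Q2"
    and Qx: "merge Qx x Sx" and A1: "outcome (Q1 @ [Pr r x]) A1"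
    and A2: "outcome (Q2 @ [Pr x r]) A2" and A: "A = {Pr r x, Pr x r} \<union> Sx \<union> A1 \<union> A2"
    using split unfolding first_arm_split_def by blast
  from eq show ?thesis
  proof (cases rule: Cons_eq_append3_cases)
    case (left A')
    with A1 have "outcome (P @ Pr b a # A' @ [Pr r x]) A1" by simp
    from outcome_join_rotated[OF this AX] show ?thesis
      by (intro first_arm_splitI[of _ "P @ a # M @ b # A'" Qx Q2 x Sx r _ A2])
        (use left Qx A2 A in \<open>auto simp: Un_ac\<close>)
  next
    case (middle B1 B2)
    from merge_expand[OF Qx middle(1) AX] show ?thesis
      by (intro first_arm_splitI[of _ Q1 "B1 @ a # M @ b # B2" Q2 x _ r A1 A2])
        (use middle A1 A2 A in \<open>auto simp: Un_ac\<close>)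
  next
    case (right C1)
    with A2 have "outcome (C1 @ Pr b a # P' @ [Pr x r]) A2" by simp
    from outcome_join_rotated[OF this AX] show ?thesis
      by (intro first_arm_splitI[of _ Q1 Qx "C1 @ a # M @ b # P'" x Sx r A1])
        (use right Qx A1 A in \<open>auto simp: Un_ac\<close>)
  qed
qed

lemma outcome_imp_first_arm_split:
  "outcome (r # Q) A \<Longrightarrow> Q \<noteq> [] \<Longrightarrow> first_arm_split r Q A"
proof (induction "length Q" arbitrary: r Q A rule: less_induct)
  case less
  from less.prems(1) show ?case
  proof (cases rule: outcome.cases)
    case outcome_stop
    with less.prems(2) show ?thesis by simp
  next
    case (outcome_join M a b AX P' P AY)
    show ?thesis
    proof (cases P)
      case Nil
      with outcome_join show ?thesis
        by (intro first_arm_splitI[of Q M "[b]" P' b "{}" r AX AY]) (auto intro: merge_single)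
    next
      case (Cons p P0)
      with outcome_join have Q: "Q = P0 @ a # M @ b # P'" and "r = p" by auto
      with outcome_join Cons have "outcome (r # P0 @ Pr b a # P') AY"
        using outcome_rotate[of P' "r # P0 @ [Pr b a]" AY] by simp
      with less.hyps Q have "first_arm_split r (P0 @ Pr b a # P') AY" by force
      from first_arm_split_expand[OF this] outcome_join Q show ?thesis
        by simp
    qed
  qed
qed

lemma outcome_Cons_iff: "Q \<noteq> [] \<Longrightarrow> outcome (r # Q) A \<longleftrightarrow> first_arm_split r Q A"
  using outcome_imp_first_arm_split first_arm_split_imp_outcome by blast

lemma outcome_short: "outcome R A \<Longrightarrow> length R \<le> 1 \<Longrightarrow> A = {}"
  by (induction rule: outcome.induct) auto

lemma outcome_Pr: "outcome R A \<Longrightarrow> t \<in> A \<Longrightarrow> \<exists>u v. t = Pr u v"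
  by (induction rule: outcome.induct) auto

section \<open>From the game to outcomes\<close>

fun outcomes :: "lbl list list \<Rightarrow> lbl set \<Rightarrow> bool" where
  "outcomes [] C \<longleftrightarrow> C = {}"
| "outcomes (R # rs) C \<longleftrightarrow> (\<exists>A B. outcome R A \<and> outcomes rs B \<and> C = A \<union> B)"

lemma outcomes_append:
  "outcomes (xs @ ys) C \<longleftrightarrow> (\<exists>A B. outcomes xs A \<and> outcomes ys B \<and> C = A \<union> B)"
proof (induction xs arbitrary: C)
  case (Cons R xs)
  have "outcomes ((R # xs) @ ys) C \<longleftrightarrow>
      (\<exists>A B1 B2. outcome R A \<and> outcomes xs B1 \<and> outcomes ys B2 \<and> C = A \<union> (B1 \<union> B2))"
    using Cons.IH by auto
  also have "\<dots> \<longleftrightarrow> (\<exists>A B. outcomes (R # xs) A \<and> outcomes ys B \<and> C = A \<union> B)"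
    by (auto simp: Un_assoc)
  finally show ?case .
qed simp

lemma outcomes_remove1:
  assumes "R \<in> set rs"
  shows "outcomes rs C \<longleftrightarrow> (\<exists>A B. outcome R A \<and> outcomes (remove1 R rs) B \<and> C = A \<union> B)"
proof -
  obtain xs ys where rs: "rs = xs @ R # ys" and "R \<notin> set xs"
    using split_list_first[OF assms] by blast
  then have "remove1 R rs = xs @ ys"
    by (simp add: remove1_append)
  then have "(\<exists>A B. outcome R A \<and> outcomes (remove1 R rs) B \<and> C = A \<union> B) \<longleftrightarrow>
      (\<exists>A B1 B2. outcome R A \<and> outcomes xs B1 \<and> outcomes ys B2 \<and> C = B1 \<union> (A \<union> B2))"
    by (auto simp: outcomes_append Un_left_commute)
  also have "\<dots> \<longleftrightarrow> outcomes rs C"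
    unfolding rs outcomes_append by auto
  finally show ?thesis ..
qed

lemma outcomes_short: "\<forall>R\<in>set rs. length R \<le> 1 \<Longrightarrow> outcomes rs C \<longleftrightarrow> C = {}"
  by (induction rs arbitrary: C) (auto intro: outcome_stop dest: outcome_short)

lemma pbs_reach_outcomes:
  "pbs_reach n rs L \<Longrightarrow> outcomes rs C \<Longrightarrow>
   \<exists>A. outcome (map Pt [1..<n+1]) A \<and> L \<union> C = Pt ` {1..n} \<union> A"
proof (induction arbitrary: C rule: pbs_reach.induct)
  case init
  then show ?case by auto
next
  case (move rs L R i j)
  define X where "X = take (j - Suc i) (drop (Suc i) R) @ [Pr (R!i) (R!j)]"
  define Y where "Y = drop (Suc j) R @ take i R @ [Pr (R!j) (R!i)]"
  from move.prems obtain C1 AX AY where C: "C = C1 \<union> AX \<union> AY"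
    and C1: "outcomes (remove1 R rs) C1" and AX: "outcome X AX" and AY: "outcome Y AY"
    unfolding X_def Y_def by (auto simp: outcomes_append)
  have R: "R = take i R @ R!i # take (j - Suc i) (drop (Suc i) R) @ R!j # drop (Suc j) R"
    using move.hyps(3,4) id_take_nth_drop[of i R] id_take_nth_drop[of "j - Suc i" "drop (Suc i) R"]
    by simp
  have "outcome R ({Pr (R!i) (R!j), Pr (R!j) (R!i)} \<union> AX \<union> AY)"
    using outcome_join[OF AX[unfolded X_def] AY[unfolded Y_def]] R by simp
  with C1 move.hyps(2) have "outcomes rs ({Pr (R!i) (R!j), Pr (R!j) (R!i)} \<union> AX \<union> AY \<union> C1)"
    using outcomes_remove1 by blast
  then obtain A where "outcome (map Pt [1..<n+1]) A"
    and "L \<union> ({Pr (R!i) (R!j), Pr (R!j) (R!i)} \<union> AX \<union> AY \<union> C1) = Pt ` {1..n} \<union> A"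
    using move.IH by blast
  then show ?case
    using C by (intro exI[of _ A]) auto
qed

lemma pbs_reach_join:
  assumes "pbs_reach n rs L" and "P @ a # M @ b # P' \<in> set rs"
  shows "pbs_reach n (remove1 (P @ a # M @ b # P') rs @ [M @ [Pr a b], P' @ P @ [Pr b a]])
    (L \<union> {Pr a b, Pr b a})"
proof -
  have "length P < length P + length M + 1" "length P + length M + 1 < length (P @ a # M @ b # P')"
    by simp_all
  from pbs_reach.move[OF assms this] show ?thesis
    by (simp add: nth_append)
qed

definition pending_moves :: "lbl list list \<Rightarrow> nat" where
  "pending_moves rs = (\<Sum>R\<leftarrow>rs. length R - 1)"

lemma pbs_reach_completes:
  "pbs_reach n rs L \<Longrightarrow> outcomes rs C \<Longrightarrow> \<exists>rs'. pbs_endstate n rs' (L \<union> C)"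
proof (induction "pending_moves rs" arbitrary: rs L C rule: less_induct)
  case less
  show ?case
  proof (cases "\<forall>R\<in>set rs. length R \<le> 1")
    case True
    with less.prems show ?thesis
      using outcomes_short unfolding pbs_endstate_def by auto
  next
    case False
    then obtain R where R: "R \<in> set rs" and len: "length R \<ge> 2" by force
    from less.prems(2) obtain A B where AR: "outcome R A"
      and B: "outcomes (remove1 R rs) B" and C: "C = A \<union> B"
      using outcomes_remove1[OF R] by blast
    from AR show ?thesis
    proof (cases rule: outcome.cases)
      case outcome_stop
      with len show ?thesis by simp
    next
      case (outcome_join M a b AX P' P AY)
      define rs' where "rs' = remove1 R rs @ [M @ [Pr a b], P' @ P @ [Pr b a]]"
      have "pbs_reach n rs' (L \<union> {Pr a b, Pr b a})"
        using pbs_reach_join[OF less.prems(1)] R outcome_join unfolding rs'_def by simp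
      moreover have "outcomes rs' (B \<union> (AX \<union> AY))"
        unfolding rs'_def outcomes_append using B outcome_join by auto
      moreover have "pending_moves rs' < pending_moves rs"
        using sum_list_map_remove1[OF R, of "\<lambda>R. length R - 1"] outcome_join
        unfolding pending_moves_def rs'_def by simp
      ultimately obtain rs'' where "pbs_endstate n rs'' (L \<union> {Pr a b, Pr b a} \<union> (B \<union> (AX \<union> AY)))"
        using less.hyps by blast
      moreover have "L \<union> {Pr a b, Pr b a} \<union> (B \<union> (AX \<union> AY)) = L \<union> C"
        using C outcome_join by auto
      ultimately show ?thesis by auto
    qed
  qed
qed

lemma pbs_count_eq_card_outcome: "pbs_count n = card {A. outcome (map Pt [1..<n+1]) A}"
proof -
  let ?R = "map Pt [1..<n+1]" and ?P = "Pt ` {1..n}"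
  have endstates: "{L. \<exists>rs. pbs_endstate n rs L} = (\<lambda>A. ?P \<union> A) ` {A. outcome ?R A}"
  proof (intro set_eqI iffI)
    fix L assume "L \<in> {L. \<exists>rs. pbs_endstate n rs L}"
    then obtain rs where "pbs_reach n rs L" "outcomes rs {}"
      using outcomes_short unfolding pbs_endstate_def by blast
    then show "L \<in> (\<lambda>A. ?P \<union> A) ` {A. outcome ?R A}"
      using pbs_reach_outcomes by fastforce
  next
    fix L assume "L \<in> (\<lambda>A. ?P \<union> A) ` {A. outcome ?R A}"
    then obtain A where "outcomes [?R] A" "L = ?P \<union> A" by auto
    then show "L \<in> {L. \<exists>rs. pbs_endstate n rs L}"
      using pbs_reach_completes[OF pbs_reach.init] by auto
  qed
  have "inj_on (\<lambda>A. ?P \<union> A) {A. outcome ?R A}"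
  proof (rule inj_onI)
    fix A A' assume "A \<in> {A. outcome ?R A}" "A' \<in> {A. outcome ?R A}" "?P \<union> A = ?P \<union> A'"
    moreover from calculation(1,2) have "A \<inter> ?P = {}" "A' \<inter> ?P = {}"
      by (auto dest: outcome_Pr)
    ultimately show "A = A'" by blast
  qed
  then show ?thesis
    unfolding pbs_count_def endstates by (rule card_image)
qed

section \<open>Subterms and independent arms\<close>

fun subterms :: "lbl \<Rightarrow> lbl set" where
  "subterms (Pt i) = {Pt i}"
| "subterms (Pr a b) = insert (Pr a b) (subterms a \<union> subterms b)"

lemma subterms_refl [simp]: "t \<in> subterms t"
  by (cases t) auto

lemma subterms_trans: "s \<in> subterms t \<Longrightarrow> t \<in> subterms u \<Longrightarrow> s \<in> subterms u"
  by (induction u) auto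

lemma size_subterms: "s \<in> subterms t \<Longrightarrow> size s \<le> size t"
  by (induction t) auto

lemma Pr_notin_subterms [simp]: "Pr a b \<notin> subterms a" "Pr a b \<notin> subterms b"
  using size_subterms[of "Pr a b" a] size_subterms[of "Pr a b" b] by auto

inductive_set pair_closure :: "lbl set \<Rightarrow> lbl set" for Z where
  base: "z \<in> Z \<Longrightarrow> z \<in> pair_closure Z"
| Pr: "u \<in> pair_closure Z \<Longrightarrow> v \<in> pair_closure Z \<Longrightarrow> Pr u v \<in> pair_closure Z"

lemma pair_closure_subset: "Z \<subseteq> pair_closure W \<Longrightarrow> pair_closure Z \<subseteq> pair_closure W"
proof
  fix t assume "Z \<subseteq> pair_closure W" "t \<in> pair_closure Z"
  then show "t \<in> pair_closure W"
    by (induction rule: pair_closure.induct[OF \<open>t \<in> pair_closure Z\<close>]) (auto intro: pair_closure.Pr)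
qed

lemma pair_closure_mono: "Z \<subseteq> W \<Longrightarrow> pair_closure Z \<subseteq> pair_closure W"
  by (meson pair_closure.base pair_closure_subset subset_iff)

lemma pair_closure_base_subterm: "t \<in> pair_closure Z \<Longrightarrow> \<exists>z\<in>Z. z \<in> subterms t"
  by (induction rule: pair_closure.induct) (use subterms_refl in blast, auto)

lemma subterm_of_pair_closure:
  "t \<in> pair_closure Z \<Longrightarrow> s \<in> subterms t \<Longrightarrow> s \<in> pair_closure Z \<or> (\<exists>z\<in>Z. s \<in> subterms z)"
  by (induction rule: pair_closure.induct) (auto intro: pair_closure.intros)

definition subterm_antichain :: "lbl set \<Rightarrow> bool" where
  "subterm_antichain Z \<longleftrightarrow> (\<forall>u\<in>Z. \<forall>v\<in>Z. u \<in> subterms v \<longrightarrow> u = v)"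

lemma subterm_antichain_subset: "subterm_antichain Z \<Longrightarrow> W \<subseteq> Z \<Longrightarrow> subterm_antichain W"
  unfolding subterm_antichain_def by blast

lemma subterm_antichain_base:
  assumes "subterm_antichain Z" "W \<subseteq> Z" "u \<in> Z" "t \<in> pair_closure W" "u \<in> subterms t"
  shows "u \<in> W"
  using subterm_of_pair_closure[OF assms(4,5)]
proof
  assume "u \<in> pair_closure W"
  with pair_closure_base_subterm obtain z where "z \<in> W" "z \<in> subterms u" by blast
  with assms show ?thesis unfolding subterm_antichain_def by auto
next
  assume "\<exists>z\<in>W. u \<in> subterms z"
  with assms show ?thesis unfolding subterm_antichain_def by auto
qed

lemma subterm_antichain_notin_pair_closure:
  "subterm_antichain Z \<Longrightarrow> W \<subseteq> Z \<Longrightarrow> u \<in> Z - W \<Longrightarrow> u \<notin> pair_closure W"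
  using subterm_antichain_base[of Z W u u] by auto

lemma pair_closure_disjoint:
  assumes "subterm_antichain Z" "W1 \<subseteq> Z" "W2 \<subseteq> Z" "W1 \<inter> W2 = {}"
  shows "pair_closure W1 \<inter> pair_closure W2 = {}"
proof (intro equalityI subsetI)
  fix t assume "t \<in> pair_closure W1 \<inter> pair_closure W2"
  moreover from this obtain z where "z \<in> W1" "z \<in> subterms t"
    using pair_closure_base_subterm by blast
  ultimately show "t \<in> {}"
    using subterm_antichain_base[OF assms(1,3)] assms(2,4) by blast
qed simp

text \<open>Distinct labels, none occurring inside another. The initial arms are independent, and
  independence is what lets the created labels determine how an outcome decomposes.\<close>

definition independent_arms :: "lbl list \<Rightarrow> bool" where
  "independent_arms R \<longleftrightarrow> distinct R \<and> subterm_antichain (set R)"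

lemma independent_arms_sublist: "independent_arms R \<Longrightarrow> distinct R' \<Longrightarrow> set R' \<subseteq> set R \<Longrightarrow> independent_arms R'"
  unfolding independent_arms_def using subterm_antichain_subset by blast

lemma outcome_labels:
  "outcome R A \<Longrightarrow> t \<in> A \<Longrightarrow> \<exists>u v. t = Pr u v \<and> u \<in> pair_closure (set R) \<and> v \<in> pair_closure (set R)"
proof (induction arbitrary: t rule: outcome.induct)
  case (outcome_join M a b A P' P B)
  let ?R = "P @ a # M @ b # P'"
  have "pair_closure (set (M @ [Pr a b])) \<subseteq> pair_closure (set ?R)"
    "pair_closure (set (P' @ P @ [Pr b a])) \<subseteq> pair_closure (set ?R)"
    by (auto intro!: pair_closure_subset intro: pair_closure.intros)
  moreover have "a \<in> pair_closure (set ?R)" "b \<in> pair_closure (set ?R)"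
    by (auto intro: pair_closure.base)
  ultimately show ?case
    using outcome_join.prems outcome_join.IH by blast
qed simp

lemma outcome_subset_pair_closure: "outcome R A \<Longrightarrow> A \<subseteq> pair_closure (set R)"
  using outcome_labels by (blast intro: pair_closure.Pr)

lemma outcome_disjoint: "independent_arms R \<Longrightarrow> outcome R A \<Longrightarrow> A \<inter> set R = {}"
proof (intro equalityI subsetI)
  fix t assume indep: "independent_arms R" and A: "outcome R A" and t: "t \<in> A \<inter> set R"
  then obtain u v where t_Pr: "t = Pr u v" and "u \<in> pair_closure (set R)"
    using outcome_labels by blast
  then obtain z where z: "z \<in> set R" "z \<in> subterms u"
    using pair_closure_base_subterm by blast
  then have "z \<in> subterms t"
    using t_Pr by simp
  with z t indep have "z = t"
    unfolding independent_arms_def subterm_antichain_def by blast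
  with z t_Pr show "t \<in> {}"
    by simp
qed simp

lemma merge_nonempty: "merge Q x S \<Longrightarrow> Q \<noteq> []"
  by (induction rule: merge.induct) auto

lemma merge_pair_closure: "merge Q x S \<Longrightarrow> x \<in> pair_closure (set Q) \<and> S \<subseteq> pair_closure (set Q)"
proof (induction rule: merge.induct)
  case (merge_single z)
  then show ?case by (auto intro: pair_closure.base)
next
  case (merge_join Qa xa Sa Qb xb Sb Qm Sm)
  let ?Q = "Qa @ Qm @ Qb"
  have sub: "pair_closure (set Qa) \<subseteq> pair_closure (set ?Q)" "pair_closure (set Qb) \<subseteq> pair_closure (set ?Q)"
    using pair_closure_mono[of "set Qa" "set ?Q"] pair_closure_mono[of "set Qb" "set ?Q"] by auto
  with merge_join.IH have "xa \<in> pair_closure (set ?Q)" "xb \<in> pair_closure (set ?Q)" by auto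
  then have "set (Qm @ [Pr xa xb]) \<subseteq> pair_closure (set ?Q)"
    by (auto intro: pair_closure.intros)
  then have "Sm \<subseteq> pair_closure (set ?Q)"
    using outcome_subset_pair_closure[OF merge_join.hyps(3)] pair_closure_subset by blast
  with merge_join.IH sub \<open>xa \<in> _\<close> \<open>xb \<in> _\<close> show ?case
    by (auto intro: pair_closure.Pr)
qed

lemma merge_ends_subterms: "merge Q x S \<Longrightarrow> hd Q \<in> subterms x \<and> last Q \<in> subterms x"
proof (induction rule: merge.induct)
  case (merge_join Qa xa Sa Qb xb Sb Qm Sm)
  then have "hd (Qa @ Qm @ Qb) = hd Qa" "last (Qa @ Qm @ Qb) = last Qb"
    using merge_nonempty by auto
  with merge_join.IH show ?case
    by simp
qed simp

lemma merge_singleton_iff: "merge [z] x S \<longleftrightarrow> x = z \<and> S = {}"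
proof
  assume "merge [z] x S"
  then show "x = z \<and> S = {}"
  proof (cases rule: merge.cases)
    case (merge_join Qa xa Sa Qb xb Sb Qm Sm)
    then have "Qa \<noteq> []" "Qb \<noteq> []"
      using merge_nonempty by blast+
    with merge_join(1) show ?thesis
      by (cases Qa) auto
  qed simp
qed (simp add: merge_single)

section \<open>Decompositions are determined by their labels\<close>

text \<open>Both decompositions join an arm built from a block \<open>Wa\<close> with an arm built from a disjoint
  block \<open>Wb\<close>, the remaining arms \<open>V\<close> being untouched: for a region \<open>Wa\<close> is its first arm, for
  a merge \<open>Wa\<close> and \<open>Wb\<close> are the two merged sub-blocks.\<close>

locale pair_join =
  fixes V Wa Wb :: "lbl set" and xa xb :: lbl
  assumes antichain: "subterm_antichain (V \<union> Wa \<union> Wb)"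
    and disjoint: "V \<inter> Wa = {}" "V \<inter> Wb = {}" "Wa \<inter> Wb = {}"
    and xa: "xa \<in> pair_closure Wa" and xb: "xb \<in> pair_closure Wb"
begin

abbreviation joined :: "lbl set" where
  "joined \<equiv> V \<union> {Pr xa xb, Pr xb xa}"

lemma subterm_in_base:
  "t \<in> pair_closure W \<Longrightarrow> W \<subseteq> V \<union> Wa \<union> Wb \<Longrightarrow> u \<in> V \<union> Wa \<union> Wb \<Longrightarrow> u \<in> subterms t \<Longrightarrow> u \<in> W"
  using subterm_antichain_base[OF antichain] by blast

lemma base_witnesses:
  obtains ua ub where "ua \<in> Wa" "ua \<in> subterms xa" "ub \<in> Wb" "ub \<in> subterms xb"
    and "\<And>p. p \<in> {Pr xa xb, Pr xb xa} \<Longrightarrow> ua \<in> subterms p \<and> ub \<in> subterms p"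
proof -
  obtain ua ub where "ua \<in> Wa" "ua \<in> subterms xa" "ub \<in> Wb" "ub \<in> subterms xb"
    using pair_closure_base_subterm[OF xa] pair_closure_base_subterm[OF xb] by blast
  then show thesis
    by (intro that) auto
qed

lemma closure_disjoint: "pair_closure Wa \<inter> pair_closure Wb = {}"
  using pair_closure_disjoint[OF antichain, of Wa Wb] disjoint by blast

lemma Pr_swap_ne: "Pr xa xb \<noteq> Pr xb xa"
  using closure_disjoint xa xb by auto

lemma Pr_notin_arms: "p \<in> {Pr xa xb, Pr xb xa} \<Longrightarrow> p \<notin> V \<union> Wa \<union> Wb"
proof
  assume "p \<in> {Pr xa xb, Pr xb xa}" "p \<in> V \<union> Wa \<union> Wb"
  moreover obtain ua ub where "ua \<in> Wa" "ub \<in> Wb" "ua \<in> subterms p" "ub \<in> subterms p"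
    using base_witnesses \<open>p \<in> {Pr xa xb, Pr xb xa}\<close> by metis
  ultimately have "ua = p" "ub = p"
    using antichain unfolding subterm_antichain_def by blast+
  with \<open>ua \<in> Wa\<close> \<open>ub \<in> Wb\<close> disjoint(3) show False
    by blast
qed

lemma Pr_notin_subterms_swap: "Pr xa xb \<notin> subterms (Pr xb xa)" "Pr xb xa \<notin> subterms (Pr xa xb)"
proof -
  obtain ua ub where ends: "ua \<in> Wa" "ua \<in> subterms xa" "ub \<in> Wb" "ub \<in> subterms xb"
    using base_witnesses by blast
  have "ua \<notin> subterms xb" "ub \<notin> subterms xa"
    using subterm_in_base[OF xb, of ua] subterm_in_base[OF xa, of ub] ends disjoint(3) by blast+
  then have "Pr xa xb \<notin> subterms xb" "Pr xb xa \<notin> subterms xa"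
    using ends subterms_trans[of ua "Pr xa xb" xb] subterms_trans[of ub "Pr xb xa" xa] by auto
  with Pr_swap_ne show "Pr xa xb \<notin> subterms (Pr xb xa)" "Pr xb xa \<notin> subterms (Pr xa xb)"
    by auto
qed

lemma arm_notin_subterms_pair: "u \<in> V \<Longrightarrow> p \<in> {Pr xa xb, Pr xb xa} \<Longrightarrow> u \<notin> subterms p"
proof
  assume u: "u \<in> V" and p: "p \<in> {Pr xa xb, Pr xb xa}" and "u \<in> subterms p"
  moreover from u p have "u \<noteq> p"
    using Pr_notin_arms[of p] by blast
  ultimately have "u \<in> subterms xa \<or> u \<in> subterms xb"
    by auto
  then have "u \<in> Wa \<or> u \<in> Wb"
    using subterm_in_base[OF xa, of u] subterm_in_base[OF xb, of u] u by blast
  with u disjoint show False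
    by blast
qed

lemma pair_notin_subterms_arm: "p \<in> {Pr xa xb, Pr xb xa} \<Longrightarrow> v \<in> V \<Longrightarrow> p \<notin> subterms v"
proof
  assume p: "p \<in> {Pr xa xb, Pr xb xa}" and v: "v \<in> V" and "p \<in> subterms v"
  obtain ua where "ua \<in> Wa" "ua \<in> subterms p"
    using base_witnesses p by metis
  with \<open>p \<in> subterms v\<close> have "ua \<in> Wa" "ua \<in> subterms v"
    using subterms_trans by blast+
  with v antichain have "ua = v"
    unfolding subterm_antichain_def by blast
  with \<open>ua \<in> Wa\<close> v disjoint(1) show False
    by blast
qed

lemma antichain_joined: "subterm_antichain joined"
  unfolding subterm_antichain_def
proof (intro ballI impI)
  fix u v assume u: "u \<in> joined" and v: "v \<in> joined" and uv: "u \<in> subterms v"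
  then consider "u \<in> V" "v \<in> V" | "u \<in> V" "v \<in> {Pr xa xb, Pr xb xa}"
    | "u \<in> {Pr xa xb, Pr xb xa}" "v \<in> V" | "u \<in> {Pr xa xb, Pr xb xa}" "v \<in> {Pr xa xb, Pr xb xa}"
    by blast
  then show "u = v"
  proof cases
    case 1
    with uv antichain show ?thesis
      unfolding subterm_antichain_def by blast
  next
    case 2
    with uv arm_notin_subterms_pair show ?thesis
      by blast
  next
    case 3
    with uv pair_notin_subterms_arm show ?thesis
      by blast
  next
    case 4
    with uv Pr_notin_subterms_swap show ?thesis
      by auto
  qed
qed

lemma joined_closure_disjoint:
  "pair_closure joined \<inter> pair_closure Wa = {}" "pair_closure joined \<inter> pair_closure Wb = {}"
proof -
  obtain ua ub where ends: "ua \<in> Wa" "ub \<in> Wb"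
    and in_pairs: "\<And>p. p \<in> {Pr xa xb, Pr xb xa} \<Longrightarrow> ua \<in> subterms p \<and> ub \<in> subterms p"
    using base_witnesses by blast
  have False if t_joined: "t \<in> pair_closure (V \<union> {Pr xa xb, Pr xb xa})"
    and t_W: "t \<in> pair_closure W" and W: "W = Wa \<or> W = Wb" for t W
  proof -
    obtain z where "z \<in> V \<union> {Pr xa xb, Pr xb xa}" "z \<in> subterms t"
      using pair_closure_base_subterm[OF t_joined] by blast
    then have "z \<in> V \<and> z \<in> subterms t \<or> ua \<in> subterms t \<and> ub \<in> subterms t"
      using in_pairs subterms_trans by blast
    then show False
      using subterm_in_base[OF t_W] W ends disjoint by blast
  qed
  then show "pair_closure joined \<inter> pair_closure Wa = {}" "pair_closure joined \<inter> pair_closure Wb = {}"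
    by blast+
qed

end

locale region_block =
  fixes r :: lbl and Q1 Qx Q2 :: "lbl list" and x :: lbl and Sx :: "lbl set"
  assumes independent: "independent_arms (r # Q1 @ Qx @ Q2)" and merge: "merge Qx x Sx"
begin

lemma distinct_parts:
  "distinct Q1" "distinct Qx" "distinct Q2" "r \<notin> set Q1 \<union> set Qx \<union> set Q2"
  "set Q1 \<inter> set Qx = {}" "set Q1 \<inter> set Q2 = {}" "set Qx \<inter> set Q2 = {}"
  using independent unfolding independent_arms_def by auto

sublocale pair_join "set Q1 \<union> set Q2" "{r}" "set Qx" r x
proof
  show "subterm_antichain (set Q1 \<union> set Q2 \<union> {r} \<union> set Qx)"
    using independent unfolding independent_arms_def by (auto intro: subterm_antichain_subset)
  show "r \<in> pair_closure {r}"
    by (rule pair_closure.base) simp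
  show "x \<in> pair_closure (set Qx)"
    using merge_pair_closure[OF merge] by blast
qed (use distinct_parts in auto)

lemma independent_left: "independent_arms (Q1 @ [Pr r x])"
  using distinct_parts Pr_notin_arms[of "Pr r x"]
    subterm_antichain_subset[OF antichain_joined, of "set Q1 \<union> {Pr r x}"]
  unfolding independent_arms_def by auto

lemma independent_right: "independent_arms (Q2 @ [Pr x r])"
  using distinct_parts Pr_notin_arms[of "Pr x r"]
    subterm_antichain_subset[OF antichain_joined, of "set Q2 \<union> {Pr x r}"]
  unfolding independent_arms_def by auto

end

locale region_split = region_block +
  fixes A1 A2 :: "lbl set"
  assumes left: "outcome (Q1 @ [Pr r x]) A1" and right: "outcome (Q2 @ [Pr x r]) A2"
begin

abbreviation labels :: "lbl set" where
  "labels \<equiv> {Pr r x, Pr x r} \<union> Sx \<union> A1 \<union> A2"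

lemma pieces_closure:
  "Sx \<subseteq> pair_closure (set Qx)"
  "A1 \<subseteq> pair_closure (set Q1 \<union> {Pr r x})" "A2 \<subseteq> pair_closure (set Q2 \<union> {Pr x r})"
  "pair_closure (set Q1 \<union> {Pr r x}) \<subseteq> pair_closure joined"
  "pair_closure (set Q2 \<union> {Pr x r}) \<subseteq> pair_closure joined"
  using merge_pair_closure[OF merge] outcome_subset_pair_closure[OF left]
    outcome_subset_pair_closure[OF right]
  by (auto intro!: pair_closure_mono)

lemma sides_disjoint: "pair_closure (set Q1 \<union> {Pr r x}) \<inter> pair_closure (set Q2 \<union> {Pr x r}) = {}"
  using pair_closure_disjoint[OF antichain_joined, of "set Q1 \<union> {Pr r x}" "set Q2 \<union> {Pr x r}"]
    distinct_parts Pr_swap_ne Pr_notin_arms by auto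

lemma block_labels: "Sx = labels \<inter> pair_closure (set Qx)"
  using pieces_closure joined_closure_disjoint(2) by (auto intro: pair_closure.base)

lemma left_labels: "A1 = labels \<inter> pair_closure (set (Q1 @ [Pr r x])) - {Pr r x}"
proof -
  have "Pr r x \<notin> A1"
    using outcome_disjoint[OF independent_left left] by auto
  moreover have "Pr x r \<notin> pair_closure (set Q1 \<union> {Pr r x})"
    using subterm_antichain_notin_pair_closure[OF antichain_joined, of "set Q1 \<union> {Pr r x}" "Pr x r"]
      Pr_swap_ne Pr_notin_arms[of "Pr x r"] by auto
  ultimately show ?thesis
    using pieces_closure sides_disjoint joined_closure_disjoint(2) by auto
qed

lemma right_labels: "A2 = labels \<inter> pair_closure (set (Q2 @ [Pr x r])) - {Pr x r}"
proof -
  have "Pr x r \<notin> A2"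
    using outcome_disjoint[OF independent_right right] by auto
  moreover have "Pr r x \<notin> pair_closure (set Q2 \<union> {Pr x r})"
    using subterm_antichain_notin_pair_closure[OF antichain_joined, of "set Q2 \<union> {Pr x r}" "Pr r x"]
      Pr_swap_ne Pr_notin_arms[of "Pr r x"] by auto
  ultimately show ?thesis
    using pieces_closure sides_disjoint joined_closure_disjoint(2) by auto
qed

lemma partner_unique: "Pr r y \<in> labels \<Longrightarrow> y = x"
proof (rule ccontr)
  assume y: "Pr r y \<in> labels" "y \<noteq> x"
  have "r \<notin> pair_closure joined"
    using joined_closure_disjoint(1) by (auto intro: pair_closure.base)
  then have "Pr r y \<notin> A1 \<union> A2"
    using outcome_labels[OF left] outcome_labels[OF right] pieces_closure by fastforce
  moreover have "Pr r y \<notin> Sx"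
    using subterm_in_base[of "Pr r y" "set Qx" r] pieces_closure(1) distinct_parts by auto
  ultimately show False
    using y Pr_swap_ne by auto
qed

end

locale join_blocks =
  fixes Qa Qm Qb :: "lbl list" and xa xb :: lbl and Sa Sb :: "lbl set"
  assumes independent: "independent_arms (Qa @ Qm @ Qb)"
    and merge_a: "merge Qa xa Sa" and merge_b: "merge Qb xb Sb"
begin

lemma distinct_parts:
  "distinct Qa" "distinct Qm" "distinct Qb"
  "set Qm \<inter> set Qa = {}" "set Qm \<inter> set Qb = {}" "set Qa \<inter> set Qb = {}"
  using independent unfolding independent_arms_def by auto

sublocale pair_join "set Qm" "set Qa" "set Qb" xa xb
proof
  show "subterm_antichain (set Qm \<union> set Qa \<union> set Qb)"
    using independent unfolding independent_arms_def by (auto intro: subterm_antichain_subset)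
qed (use distinct_parts merge_pair_closure[OF merge_a] merge_pair_closure[OF merge_b] in auto)

lemma independent_middle: "independent_arms (Qm @ [Pr xa xb])"
  using distinct_parts Pr_notin_arms[of "Pr xa xb"]
    subterm_antichain_subset[OF antichain_joined, of "set Qm \<union> {Pr xa xb}"]
  unfolding independent_arms_def by auto

end

locale join_split = join_blocks +
  fixes Sm :: "lbl set"
  assumes middle: "outcome (Qm @ [Pr xa xb]) Sm"
begin

abbreviation labels :: "lbl set" where
  "labels \<equiv> {Pr xa xb, Pr xb xa} \<union> Sa \<union> Sb \<union> Sm"

lemma pieces_closure:
  "Sa \<subseteq> pair_closure (set Qa)" "Sb \<subseteq> pair_closure (set Qb)"
  "Sm \<subseteq> pair_closure (set Qm \<union> {Pr xa xb})"
  "pair_closure (set Qm \<union> {Pr xa xb}) \<subseteq> pair_closure joined"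
  using merge_pair_closure[OF merge_a] merge_pair_closure[OF merge_b]
    outcome_subset_pair_closure[OF middle]
  by (auto intro!: pair_closure_mono)

lemma pairs_in_joined_closure: "Pr xa xb \<in> pair_closure joined" "Pr xb xa \<in> pair_closure joined"
  by (auto intro: pair_closure.base)

lemma block_labels: "Sa = labels \<inter> pair_closure (set Qa)" "Sb = labels \<inter> pair_closure (set Qb)"
  using pieces_closure pairs_in_joined_closure closure_disjoint joined_closure_disjoint by blast+

lemma middle_labels: "Sm = labels \<inter> pair_closure (set (Qm @ [Pr xa xb])) - {Pr xa xb}"
proof -
  have "Pr xa xb \<notin> Sm"
    using outcome_disjoint[OF independent_middle middle] by auto
  moreover have "Pr xb xa \<notin> pair_closure (set Qm \<union> {Pr xa xb})"
    using subterm_antichain_notin_pair_closure[OF antichain_joined, of "set Qm \<union> {Pr xa xb}" "Pr xb xa"]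
      Pr_swap_ne Pr_notin_arms[of "Pr xb xa"] by auto
  ultimately show ?thesis
    using pieces_closure joined_closure_disjoint by auto
qed

end

lemma take_drop_split3: "take a Q @ take l (drop a Q) @ drop (a + l) Q = Q"
  by (metis append.assoc append_take_drop_id drop_drop add.commute)

lemma distinct_nth_in_take_drop:
  assumes "distinct xs" "i < length xs" "xs ! i \<in> set (take l (drop k xs))"
  shows "k \<le> i \<and> i < k + l"
proof -
  from assms(3) obtain j where j: "j < l" "k + j < length xs" "xs ! (k + j) = xs ! i"
    by (auto simp: in_set_conv_nth)
  then have "k + j = i"
    using nth_eq_iff_index_eq[OF assms(1) j(2) assms(2)] by simp
  with j show ?thesis
    by simp
qed

lemma block_ends:
  assumes "a + b < length Q"
  shows "hd (take (Suc b) (drop a Q)) = Q ! a" "last (take (Suc b) (drop a Q)) = Q ! (a + b)"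
proof -
  have "length (take (Suc b) (drop a Q)) = Suc b"
    using assms by simp
  with assms show "hd (take (Suc b) (drop a Q)) = Q ! a" "last (take (Suc b) (drop a Q)) = Q ! (a + b)"
    by (simp_all add: hd_conv_nth last_conv_nth)
qed

text \<open>The first and the last arm of a block both occur in the merged label.\<close>

lemma merge_block_unique:
  assumes indep: "independent_arms Q" and len: "a + b < length Q" "a' + b' < length Q"
    and merges: "merge (take (Suc b) (drop a Q)) x S" "merge (take (Suc b') (drop a' Q)) x S'"
  shows "a = a' \<and> b = b'"
proof -
  have in_block: "Q ! i \<in> set (take (Suc d) (drop c Q))"
    if "i < length Q" "Q ! i \<in> subterms x" "merge (take (Suc d) (drop c Q)) x T" for i c d T
  proof (rule subterm_antichain_base[of "set Q"])
    show "subterm_antichain (set Q)" using indep by (simp add: independent_arms_def)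
    show "x \<in> pair_closure (set (take (Suc d) (drop c Q)))"
      using merge_pair_closure[OF that(3)] by blast
  qed (use that in \<open>auto dest: in_set_takeD in_set_dropD\<close>)
  have "Q ! a \<in> subterms x \<and> Q ! (a + b) \<in> subterms x"
    "Q ! a' \<in> subterms x \<and> Q ! (a' + b') \<in> subterms x"
    using merge_ends_subterms[OF merges(1)] merge_ends_subterms[OF merges(2)]
    unfolding block_ends[OF len(1)] block_ends[OF len(2)] .
  then have ends: "Q ! a \<in> subterms x" "Q ! (a + b) \<in> subterms x"
    "Q ! a' \<in> subterms x" "Q ! (a' + b') \<in> subterms x"
    by blast+
  have dist: "distinct Q" using indep by (simp add: independent_arms_def)
  have "a < length Q" "a' < length Q"
    using len by simp_all
  then have "a' \<le> a" "a + b < a' + Suc b'" "a \<le> a'" "a' + b' < a + Suc b"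
    using distinct_nth_in_take_drop[OF dist len(1) in_block[OF len(1) ends(2) merges(2)]]
      distinct_nth_in_take_drop[OF dist _ in_block[OF _ ends(1) merges(2)]]
      distinct_nth_in_take_drop[OF dist len(2) in_block[OF len(2) ends(4) merges(1)]]
      distinct_nth_in_take_drop[OF dist _ in_block[OF _ ends(3) merges(1)]]
    by simp_all
  then show ?thesis
    by simp
qed

section \<open>Counting\<close>

lemma take_drop_join_blocks:
  assumes "length Q = Suc (Suc m)" "a + b \<le> m"
  shows "Q = take (Suc a) Q @ take (m - a - b) (drop (Suc a) Q) @ drop (Suc m - b) Q"
  using take_drop_split3[of "Suc a" Q "m - a - b"] assms by (simp add: Suc_diff_le)

text \<open>A decomposition of an outcome of \<open>r # Q\<close> as in \<^const>\<open>first_arm_split\<close>, the merged block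
  starting at position \<open>a\<close> of \<open>Q\<close> and having \<open>b + 1\<close> arms.\<close>

definition first_arm_splits :: "lbl \<Rightarrow> lbl list \<Rightarrow> nat \<Rightarrow>
    (nat \<times> nat \<times> (lbl \<times> lbl set) \<times> lbl set \<times> lbl set) set" where
  "first_arm_splits r Q m = (SIGMA a:{0..m}. SIGMA b:{0..m-a}.
     SIGMA xS:{(x, Sx). merge (take (Suc b) (drop a Q)) x Sx}.
       {A1. outcome (take a Q @ [Pr r (fst xS)]) A1} \<times> {A2. outcome (drop (a + Suc b) Q @ [Pr (fst xS) r]) A2})"

definition first_arm_labels :: "lbl \<Rightarrow> nat \<times> nat \<times> (lbl \<times> lbl set) \<times> lbl set \<times> lbl set \<Rightarrow> lbl set" where
  "first_arm_labels r = (\<lambda>(a, b, (x, Sx), A1, A2). {Pr r x, Pr x r} \<union> Sx \<union> A1 \<union> A2)"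

lemma mem_first_arm_splits:
  "(a, b, (x, Sx), A1, A2) \<in> first_arm_splits r Q m \<longleftrightarrow> a + b \<le> m \<and> merge (take (Suc b) (drop a Q)) x Sx \<and>
     outcome (take a Q @ [Pr r x]) A1 \<and> outcome (drop (a + Suc b) Q @ [Pr x r]) A2"
proof -
  have "a \<le> m \<and> b \<le> m - a \<longleftrightarrow> a + b \<le> m"
    by arith
  then show ?thesis
    unfolding first_arm_splits_def by simp blast
qed

lemma outcome_Cons_eq_image:
  assumes len: "length Q = Suc m"
  shows "{A. outcome (r # Q) A} = first_arm_labels r ` first_arm_splits r Q m"
proof (intro equalityI subsetI)
  fix A assume "A \<in> {A. outcome (r # Q) A}"
  moreover have "Q \<noteq> []"
    using len by auto
  ultimately have "first_arm_split r Q A"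
    using outcome_Cons_iff by blast
  then obtain Q1 Qx Q2 x Sx A1 A2 where Q: "Q = Q1 @ Qx @ Q2" and Qx: "merge Qx x Sx"
    and A1: "outcome (Q1 @ [Pr r x]) A1" and A2: "outcome (Q2 @ [Pr x r]) A2"
    and A: "A = {Pr r x, Pr x r} \<union> Sx \<union> A1 \<union> A2"
    unfolding first_arm_split_def by blast
  obtain b where b: "length Qx = Suc b"
    using merge_nonempty[OF Qx] by (cases Qx) auto
  with Q len have "take (length Q1) Q = Q1" "take (Suc b) (drop (length Q1) Q) = Qx"
    "drop (length Q1 + Suc b) Q = Q2" "length Q1 + b \<le> m"
    by simp_all
  with Qx A1 A2 have "(length Q1, b, (x, Sx), A1, A2) \<in> first_arm_splits r Q m"
    unfolding mem_first_arm_splits by simp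
  moreover have "A = first_arm_labels r (length Q1, b, (x, Sx), A1, A2)"
    using A by (simp add: first_arm_labels_def)
  ultimately show "A \<in> first_arm_labels r ` first_arm_splits r Q m"
    by blast
next
  fix A assume "A \<in> first_arm_labels r ` first_arm_splits r Q m"
  then obtain d where "d \<in> first_arm_splits r Q m" "A = first_arm_labels r d"
    by blast
  moreover obtain a b x Sx A1 A2 where "d = (a, b, (x, Sx), A1, A2)"
    by (metis prod.collapse)
  ultimately have "merge (take (Suc b) (drop a Q)) x Sx" "outcome (take a Q @ [Pr r x]) A1"
    "outcome (drop (a + Suc b) Q @ [Pr x r]) A2" "A = {Pr r x, Pr x r} \<union> Sx \<union> A1 \<union> A2"
    by (simp_all add: mem_first_arm_splits first_arm_labels_def)
  then have "first_arm_split r Q A"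
    by (intro first_arm_splitI[OF take_drop_split3[of a Q "Suc b", symmetric]])
  then show "A \<in> {A. outcome (r # Q) A}"
    using first_arm_split_imp_outcome by blast
qed

lemma inj_on_first_arm_labels:
  assumes indep: "independent_arms (r # Q)" and len: "length Q = Suc m"
  shows "inj_on (first_arm_labels r) (first_arm_splits r Q m)"
proof (rule inj_onI)
  fix d d' assume "d \<in> first_arm_splits r Q m" "d' \<in> first_arm_splits r Q m"
    and labels_eq: "first_arm_labels r d = first_arm_labels r d'"
  moreover obtain a b x Sx A1 A2 a' b' x' Sx' A1' A2'
    where tuples: "d = (a, b, (x, Sx), A1, A2)" "d' = (a', b', (x', Sx'), A1', A2')"
    by (metis prod.collapse)
  ultimately have split: "a + b \<le> m" "merge (take (Suc b) (drop a Q)) x Sx"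
      "outcome (take a Q @ [Pr r x]) A1" "outcome (drop (a + Suc b) Q @ [Pr x r]) A2"
    and split': "a' + b' \<le> m" "merge (take (Suc b') (drop a' Q)) x' Sx'"
      "outcome (take a' Q @ [Pr r x']) A1'" "outcome (drop (a' + Suc b') Q @ [Pr x' r]) A2'"
    by (simp_all add: mem_first_arm_splits)
  interpret s: region_split r "take a Q" "take (Suc b) (drop a Q)" "drop (a + Suc b) Q" x Sx A1 A2
    by unfold_locales (use indep split take_drop_split3[of a Q "Suc b"] in simp_all)
  interpret s': region_split r "take a' Q" "take (Suc b') (drop a' Q)" "drop (a' + Suc b') Q" x' Sx' A1' A2'
    by unfold_locales (use indep split' take_drop_split3[of a' Q "Suc b'"] in simp_all)
  have labels_eq: "{Pr r x, Pr x r} \<union> Sx \<union> A1 \<union> A2 = {Pr r x', Pr x' r} \<union> Sx' \<union> A1' \<union> A2'"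
    using labels_eq unfolding tuples first_arm_labels_def by simp
  then have "Pr r x' \<in> {Pr r x, Pr x r} \<union> Sx \<union> A1 \<union> A2"
    by blast
  then have x: "x' = x"
    by (rule s.partner_unique)
  have "independent_arms Q"
    using independent_arms_sublist[OF indep, of Q] indep by (auto simp: independent_arms_def)
  moreover have "a + b < length Q" "a' + b' < length Q"
    using split(1) split'(1) len by simp_all
  ultimately have ab: "a' = a" "b' = b"
    using merge_block_unique[OF _ _ _ split(2) split'(2)[unfolded x]] by simp_all
  have "Sx = Sx'"
    by (subst s.block_labels, subst s'.block_labels) (simp only: labels_eq ab x)
  moreover have "A1 = A1'"
    by (subst s.left_labels, subst s'.left_labels) (simp only: labels_eq ab x)
  moreover have "A2 = A2'"
    by (subst s.right_labels, subst s'.right_labels) (simp only: labels_eq ab x)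
  ultimately show "d = d'"
    unfolding tuples using ab x by simp
qed

text \<open>A decomposition of a merge of \<open>Q\<close> as in the rule \<open>merge_join\<close>, the two merged sub-blocks
  being the first \<open>a + 1\<close> and the last \<open>b + 1\<close> arms of \<open>Q\<close>.\<close>

definition merge_splits :: "lbl list \<Rightarrow> nat \<Rightarrow>
    (nat \<times> nat \<times> ((lbl \<times> lbl set) \<times> (lbl \<times> lbl set)) \<times> lbl set) set" where
  "merge_splits Q m = (SIGMA a:{0..m}. SIGMA b:{0..m-a}.
     SIGMA p:{(xa, Sa). merge (take (Suc a) Q) xa Sa} \<times> {(xb, Sb). merge (drop (Suc m - b) Q) xb Sb}.
       {Sm. outcome (take (m - a - b) (drop (Suc a) Q) @ [Pr (fst (fst p)) (fst (snd p))]) Sm})"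

definition merge_labels ::
    "nat \<times> nat \<times> ((lbl \<times> lbl set) \<times> (lbl \<times> lbl set)) \<times> lbl set \<Rightarrow> lbl \<times> lbl set" where
  "merge_labels = (\<lambda>(a, b, ((xa, Sa), (xb, Sb)), Sm). (Pr xb xa, {Pr xa xb, Pr xb xa} \<union> Sa \<union> Sb \<union> Sm))"

lemma mem_merge_splits:
  "(a, b, ((xa, Sa), (xb, Sb)), Sm) \<in> merge_splits Q m \<longleftrightarrow> a + b \<le> m \<and> merge (take (Suc a) Q) xa Sa \<and>
     merge (drop (Suc m - b) Q) xb Sb \<and> outcome (take (m - a - b) (drop (Suc a) Q) @ [Pr xa xb]) Sm"
proof -
  have "a \<le> m \<and> b \<le> m - a \<longleftrightarrow> a + b \<le> m"
    by arith
  then show ?thesis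
    unfolding merge_splits_def by simp blast
qed

lemma merge_eq_image:
  assumes len: "length Q = Suc (Suc m)"
  shows "{(x, S). merge Q x S} = merge_labels ` merge_splits Q m"
proof (intro equalityI subsetI)
  fix p assume "p \<in> {(x, S). merge Q x S}"
  then obtain x S where p: "p = (x, S)" and "merge Q x S"
    by blast
  from this(2) show "p \<in> merge_labels ` merge_splits Q m"
  proof (cases rule: merge.cases)
    case merge_single
    with len show ?thesis by simp
  next
    case (merge_join Qa xa Sa Qb xb Sb Qm Sm)
    moreover obtain a b where "length Qa = Suc a" "length Qb = Suc b"
      using merge_nonempty merge_join by (metis length_greater_0_conv Suc_pred)
    moreover from calculation have "take (Suc a) Q = Qa" "drop (Suc m - b) Q = Qb"
      "take (m - a - b) (drop (Suc a) Q) = Qm" "a + b \<le> m"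
      using len by simp_all
    ultimately have "(a, b, ((xa, Sa), (xb, Sb)), Sm) \<in> merge_splits Q m"
      unfolding mem_merge_splits by simp
    moreover have "p = merge_labels (a, b, ((xa, Sa), (xb, Sb)), Sm)"
      using p merge_join by (simp add: merge_labels_def)
    ultimately show ?thesis
      by blast
  qed
next
  fix p assume "p \<in> merge_labels ` merge_splits Q m"
  then obtain d where "d \<in> merge_splits Q m" "p = merge_labels d"
    by blast
  moreover obtain a b xa Sa xb Sb Sm where "d = (a, b, ((xa, Sa), (xb, Sb)), Sm)"
    by (metis prod.collapse)
  ultimately have "a + b \<le> m" "merge (take (Suc a) Q) xa Sa" "merge (drop (Suc m - b) Q) xb Sb"
    "outcome (take (m - a - b) (drop (Suc a) Q) @ [Pr xa xb]) Sm"
    "p = (Pr xb xa, {Pr xa xb, Pr xb xa} \<union> Sa \<union> Sb \<union> Sm)"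
    by (simp_all add: mem_merge_splits merge_labels_def)
  moreover from merge_join[OF this(2,3,4)] this(1)
  have "merge Q (Pr xb xa) ({Pr xa xb, Pr xb xa} \<union> Sa \<union> Sb \<union> Sm)"
    by (simp only: take_drop_join_blocks[OF len, symmetric])
  ultimately show "p \<in> {(x, S). merge Q x S}"
    by simp
qed

lemma merge_prefix_suffix_unique:
  assumes indep: "independent_arms Q" and len: "length Q = Suc (Suc m)"
    and "a + b \<le> m" "a' + b' \<le> m"
    and "merge (take (Suc a) Q) xa Sa" "merge (take (Suc a') Q) xa Sa'"
    and "merge (drop (Suc m - b) Q) xb Sb" "merge (drop (Suc m - b') Q) xb Sb'"
  shows "a' = a" "b' = b"
proof -
  have suffix: "take (Suc b) (drop (Suc m - b) Q) = drop (Suc m - b) Q"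
    "take (Suc b') (drop (Suc m - b') Q) = drop (Suc m - b') Q"
    using len assms(3,4) by simp_all
  have blocks: "merge (take (Suc a) (drop 0 Q)) xa Sa" "merge (take (Suc a') (drop 0 Q)) xa Sa'"
    "merge (take (Suc b) (drop (Suc m - b) Q)) xb Sb" "merge (take (Suc b') (drop (Suc m - b') Q)) xb Sb'"
    unfolding suffix drop_0 using assms(5-8) by simp_all
  have "0 + a < length Q" "0 + a' < length Q" "Suc m - b + b < length Q" "Suc m - b' + b' < length Q"
    using len assms(3,4) by simp_all
  from merge_block_unique[OF indep this(1,2) blocks(1,2)] merge_block_unique[OF indep this(3,4) blocks(3,4)]
  show "a' = a" "b' = b"
    using assms(3,4) by simp_all
qed

lemma inj_on_merge_labels:
  assumes indep: "independent_arms Q" and len: "length Q = Suc (Suc m)"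
  shows "inj_on merge_labels (merge_splits Q m)"
proof (rule inj_onI)
  fix d d' assume "d \<in> merge_splits Q m" "d' \<in> merge_splits Q m"
    and labels_eq: "merge_labels d = merge_labels d'"
  moreover obtain a b xa Sa xb Sb Sm a' b' xa' Sa' xb' Sb' Sm'
    where tuples: "d = (a, b, ((xa, Sa), (xb, Sb)), Sm)" "d' = (a', b', ((xa', Sa'), (xb', Sb')), Sm')"
    by (metis prod.collapse)
  ultimately have split: "a + b \<le> m" "merge (take (Suc a) Q) xa Sa" "merge (drop (Suc m - b) Q) xb Sb"
      "outcome (take (m - a - b) (drop (Suc a) Q) @ [Pr xa xb]) Sm"
    and split': "a' + b' \<le> m" "merge (take (Suc a') Q) xa' Sa'" "merge (drop (Suc m - b') Q) xb' Sb'"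
      "outcome (take (m - a' - b') (drop (Suc a') Q) @ [Pr xa' xb']) Sm'"
    by (simp_all add: mem_merge_splits)
  interpret s: join_split "take (Suc a) Q" "take (m - a - b) (drop (Suc a) Q)" "drop (Suc m - b) Q"
    xa xb Sa Sb Sm
    by unfold_locales (use indep split take_drop_join_blocks[OF len split(1)] in simp_all)
  interpret s': join_split "take (Suc a') Q" "take (m - a' - b') (drop (Suc a') Q)" "drop (Suc m - b') Q"
    xa' xb' Sa' Sb' Sm'
    by unfold_locales (use indep split' take_drop_join_blocks[OF len split'(1)] in simp_all)
  from labels_eq have "(Pr xb xa, {Pr xa xb, Pr xb xa} \<union> Sa \<union> Sb \<union> Sm)
      = (Pr xb' xa', {Pr xa' xb', Pr xb' xa'} \<union> Sa' \<union> Sb' \<union> Sm')"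
    unfolding tuples merge_labels_def by (simp only: prod.case)
  then have arms_eq: "Pr xb xa = Pr xb' xa'"
    and labels_eq: "{Pr xa xb, Pr xb xa} \<union> Sa \<union> Sb \<union> Sm = {Pr xa' xb', Pr xb' xa'} \<union> Sa' \<union> Sb' \<union> Sm'"
    unfolding prod.inject by blast+
  from arms_eq have x: "xa' = xa" "xb' = xb"
    by simp_all
  from merge_prefix_suffix_unique[OF indep len split(1) split'(1) split(2)] split'(2) split(3) split'(3)
  have ab: "a' = a" "b' = b"
    unfolding x by simp_all
  have "Sa = Sa'"
    by (subst s.block_labels(1), subst s'.block_labels(1)) (simp only: labels_eq x ab)
  moreover have "Sb = Sb'"
    by (subst s.block_labels(2), subst s'.block_labels(2)) (simp only: labels_eq x ab)
  moreover have "Sm = Sm'"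
    by (subst s.middle_labels, subst s'.middle_labels) (simp only: labels_eq x ab)
  ultimately show "d = d'"
    unfolding tuples using x ab by simp
qed

lemma card_triangle_Sigma:
  fixes m :: nat
  assumes "\<And>a b. a + b \<le> m \<Longrightarrow> finite (P a b) \<and> card (P a b) = p a b"
    and "\<And>a b u. a + b \<le> m \<Longrightarrow> u \<in> P a b \<Longrightarrow> finite (F a b u) \<and> card (F a b u) = f a b"
  shows "card (SIGMA a:{0..m}. SIGMA b:{0..m-a}. SIGMA u:P a b. F a b u)
    = (\<Sum>a=0..m. \<Sum>b=0..m-a. p a b * f a b)"
proof -
  have inner: "finite (Sigma (P a b) (F a b)) \<and> card (Sigma (P a b) (F a b)) = p a b * f a b"
    if "a \<in> {0..m}" "b \<in> {0..m-a}" for a b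
  proof -
    from that have "a + b \<le> m"
      by (auto simp: le_diff_conv2)
    have "card (Sigma (P a b) (F a b)) = (\<Sum>u\<in>P a b. card (F a b u))"
      using assms \<open>a + b \<le> m\<close> by (intro card_SigmaI) auto
    also have "\<dots> = p a b * f a b"
      using assms \<open>a + b \<le> m\<close> by simp
    finally show ?thesis
      using assms \<open>a + b \<le> m\<close> by auto
  qed
  have middle: "finite (SIGMA b:{0..m-a}. Sigma (P a b) (F a b)) \<and>
      card (SIGMA b:{0..m-a}. Sigma (P a b) (F a b)) = (\<Sum>b=0..m-a. p a b * f a b)"
    if "a \<in> {0..m}" for a
  proof -
    have "card (SIGMA b:{0..m-a}. Sigma (P a b) (F a b)) = (\<Sum>b=0..m-a. card (Sigma (P a b) (F a b)))"
      using inner that by (intro card_SigmaI) auto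
    also have "\<dots> = (\<Sum>b=0..m-a. p a b * f a b)"
      using inner that by (intro sum.cong) auto
    finally show ?thesis
      using inner that by auto
  qed
  have "card (SIGMA a:{0..m}. SIGMA b:{0..m-a}. Sigma (P a b) (F a b))
      = (\<Sum>a=0..m. card (SIGMA b:{0..m-a}. Sigma (P a b) (F a b)))"
    using middle by (intro card_SigmaI) auto
  also have "\<dots> = (\<Sum>a=0..m. \<Sum>b=0..m-a. p a b * f a b)"
    using middle by (intro sum.cong) auto
  finally show ?thesis .
qed

lemma finite_if_card_ternary: "card A = ternary m \<Longrightarrow> finite A"
  using ternary_pos[of m] by (intro card_ge_0_finite) simp

lemma card_first_arm_splits:
  assumes count_outcome: "\<And>m' R. m' \<le> m \<Longrightarrow> independent_arms R \<Longrightarrow> length R = Suc m' \<Longrightarrow>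
      card {A. outcome R A} = ternary m'"
    and count_merge: "\<And>m' Q'. m' \<le> m \<Longrightarrow> independent_arms Q' \<Longrightarrow> length Q' = Suc m' \<Longrightarrow>
      card {(x, S). merge Q' x S} = ternary m'"
    and indep: "independent_arms (r # Q)" and len: "length Q = Suc m"
  shows "card (first_arm_splits r Q m) = ternary (Suc m)"
proof -
  have "card (first_arm_splits r Q m) = (\<Sum>a=0..m. \<Sum>b=0..m-a. ternary b * (ternary a * ternary (m-a-b)))"
    unfolding first_arm_splits_def
  proof (rule card_triangle_Sigma)
    fix a b assume ab: "a + b \<le> m"
    have "set (take (Suc b) (drop a Q)) \<subseteq> set (r # Q)"
      by (meson set_drop_subset set_take_subset set_subset_Cons subset_trans)
    moreover have "distinct (take (Suc b) (drop a Q))"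
      using indep by (simp add: independent_arms_def)
    ultimately have "independent_arms (take (Suc b) (drop a Q))"
      using independent_arms_sublist[OF indep] by blast
    with ab len have "card {(x, Sx). merge (take (Suc b) (drop a Q)) x Sx} = ternary b"
      using count_merge[of b] by simp
    then show "finite {(x, Sx). merge (take (Suc b) (drop a Q)) x Sx} \<and>
        card {(x, Sx). merge (take (Suc b) (drop a Q)) x Sx} = ternary b"
      using finite_if_card_ternary by blast
  next
    fix a b xS assume ab: "a + b \<le> m" and xS: "xS \<in> {(x, Sx). merge (take (Suc b) (drop a Q)) x Sx}"
    interpret region_block r "take a Q" "take (Suc b) (drop a Q)" "drop (a + Suc b) Q" "fst xS" "snd xS"
      by unfold_locales (use indep xS take_drop_split3[of a Q "Suc b"] in auto)
    have "card {A1. outcome (take a Q @ [Pr r (fst xS)]) A1} = ternary a"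
      "card {A2. outcome (drop (a + Suc b) Q @ [Pr (fst xS) r]) A2} = ternary (m - a - b)"
      using count_outcome[of a, OF _ independent_left] count_outcome[of "m - a - b", OF _ independent_right]
        ab len by simp_all
    then show "finite ({A1. outcome (take a Q @ [Pr r (fst xS)]) A1} \<times>
          {A2. outcome (drop (a + Suc b) Q @ [Pr (fst xS) r]) A2}) \<and>
        card ({A1. outcome (take a Q @ [Pr r (fst xS)]) A1} \<times>
          {A2. outcome (drop (a + Suc b) Q @ [Pr (fst xS) r]) A2}) = ternary a * ternary (m - a - b)"
      using finite_if_card_ternary by (metis card_cartesian_product finite_cartesian_product)
  qed
  also have "\<dots> = ternary (Suc m)"
    by (simp add: ac_simps)
  finally show ?thesis .
qed

lemma card_merge_splits:
  assumes count_outcome: "\<And>m' R. m' \<le> m \<Longrightarrow> independent_arms R \<Longrightarrow> length R = Suc m' \<Longrightarrow>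
      card {A. outcome R A} = ternary m'"
    and count_merge: "\<And>m' Q'. m' \<le> m \<Longrightarrow> independent_arms Q' \<Longrightarrow> length Q' = Suc m' \<Longrightarrow>
      card {(x, S). merge Q' x S} = ternary m'"
    and indep: "independent_arms Q" and len: "length Q = Suc (Suc m)"
  shows "card (merge_splits Q m) = ternary (Suc m)"
proof -
  have "card (merge_splits Q m) = (\<Sum>a=0..m. \<Sum>b=0..m-a. (ternary a * ternary b) * ternary (m-a-b))"
    unfolding merge_splits_def
  proof (rule card_triangle_Sigma)
    fix a b assume ab: "a + b \<le> m"
    have "distinct Q"
      using indep by (simp add: independent_arms_def)
    then have "independent_arms (take (Suc a) Q)" "independent_arms (drop (Suc m - b) Q)"
      by (auto intro!: independent_arms_sublist[OF indep] set_take_subset set_drop_subset)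
    with ab len have "card {(xa, Sa). merge (take (Suc a) Q) xa Sa} = ternary a"
      "card {(xb, Sb). merge (drop (Suc m - b) Q) xb Sb} = ternary b"
      using count_merge[of a] count_merge[of b] by simp_all
    then show "finite ({(xa, Sa). merge (take (Suc a) Q) xa Sa} \<times> {(xb, Sb). merge (drop (Suc m - b) Q) xb Sb}) \<and>
      card ({(xa, Sa). merge (take (Suc a) Q) xa Sa} \<times> {(xb, Sb). merge (drop (Suc m - b) Q) xb Sb})
        = ternary a * ternary b"
      using finite_if_card_ternary by (metis card_cartesian_product finite_cartesian_product)
  next
    fix a b p
    assume ab: "a + b \<le> m"
      and p: "p \<in> {(xa, Sa). merge (take (Suc a) Q) xa Sa} \<times> {(xb, Sb). merge (drop (Suc m - b) Q) xb Sb}"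
    interpret join_blocks "take (Suc a) Q" "take (m - a - b) (drop (Suc a) Q)" "drop (Suc m - b) Q"
      "fst (fst p)" "fst (snd p)" "snd (fst p)" "snd (snd p)"
      by unfold_locales (use indep p take_drop_join_blocks[OF len ab] in auto)
    have "card {Sm. outcome (take (m - a - b) (drop (Suc a) Q) @ [Pr (fst (fst p)) (fst (snd p))]) Sm}
        = ternary (m - a - b)"
      using count_outcome[of "m - a - b", OF _ independent_middle] ab len by simp
    then show "finite {Sm. outcome (take (m - a - b) (drop (Suc a) Q) @ [Pr (fst (fst p)) (fst (snd p))]) Sm} \<and>
      card {Sm. outcome (take (m - a - b) (drop (Suc a) Q) @ [Pr (fst (fst p)) (fst (snd p))]) Sm}
        = ternary (m - a - b)"
      using finite_if_card_ternary by blast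
  qed
  then show ?thesis
    by simp
qed

lemma card_outcome_Cons:
  assumes count_outcome: "\<And>m' R. m' \<le> m \<Longrightarrow> independent_arms R \<Longrightarrow> length R = Suc m' \<Longrightarrow>
      card {A. outcome R A} = ternary m'"
    and count_merge: "\<And>m' Q'. m' \<le> m \<Longrightarrow> independent_arms Q' \<Longrightarrow> length Q' = Suc m' \<Longrightarrow>
      card {(x, S). merge Q' x S} = ternary m'"
    and indep: "independent_arms (r # Q)" and len: "length Q = Suc m"
  shows "card {A. outcome (r # Q) A} = ternary (Suc m)"
proof -
  have "card {A. outcome (r # Q) A} = card (first_arm_splits r Q m)"
    unfolding outcome_Cons_eq_image[OF len] by (rule card_image[OF inj_on_first_arm_labels[OF indep len]])
  also have "\<dots> = ternary (Suc m)"
    by (rule card_first_arm_splits[OF count_outcome count_merge indep len])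
  finally show ?thesis .
qed

lemma card_merge:
  assumes count_outcome: "\<And>m' R. m' \<le> m \<Longrightarrow> independent_arms R \<Longrightarrow> length R = Suc m' \<Longrightarrow>
      card {A. outcome R A} = ternary m'"
    and count_merge: "\<And>m' Q'. m' \<le> m \<Longrightarrow> independent_arms Q' \<Longrightarrow> length Q' = Suc m' \<Longrightarrow>
      card {(x, S). merge Q' x S} = ternary m'"
    and indep: "independent_arms Q" and len: "length Q = Suc (Suc m)"
  shows "card {(x, S). merge Q x S} = ternary (Suc m)"
proof -
  have "card {(x, S). merge Q x S} = card (merge_splits Q m)"
    unfolding merge_eq_image[OF len] by (rule card_image[OF inj_on_merge_labels[OF indep len]])
  also have "\<dots> = ternary (Suc m)"
    by (rule card_merge_splits[OF count_outcome count_merge indep len])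
  finally show ?thesis .
qed

lemma card_outcome_singleton: "card {A. outcome [z] A} = ternary 0"
proof -
  have "{A. outcome [z] A} = {{}}"
    by (auto intro: outcome_stop dest: outcome_short)
  then show ?thesis
    by simp
qed

lemma card_merge_singleton: "card {(x, S). merge [z] x S} = ternary 0"
proof -
  have "{(x, S). merge [z] x S} = {(z, {})}"
    by (auto simp: merge_singleton_iff)
  then show ?thesis
    by simp
qed

lemma card_outcome_and_merge:
  "(\<forall>R. independent_arms R \<longrightarrow> length R = Suc m \<longrightarrow> card {A. outcome R A} = ternary m) \<and>
   (\<forall>Q. independent_arms Q \<longrightarrow> length Q = Suc m \<longrightarrow> card {(x, S). merge Q x S} = ternary m)"
proof (induction m rule: less_induct)
  case (less m)
  show ?case
  proof (cases m)
    case 0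
    then show ?thesis
      using card_outcome_singleton card_merge_singleton by (auto simp: length_Suc_conv)
  next
    case (Suc m0)
    have count_outcome: "card {A. outcome R A} = ternary m'"
      and count_merge: "card {(x, S). merge R x S} = ternary m'"
      if "m' \<le> m0" "independent_arms R" "length R = Suc m'" for m' R
    proof -
      from that(1) Suc have "m' < m"
        by simp
      with less.IH that(2,3) show "card {A. outcome R A} = ternary m'" "card {(x, S). merge R x S} = ternary m'"
        by blast+
    qed
    have "card {A. outcome R A} = ternary m" if "independent_arms R" "length R = Suc m" for R
    proof -
      obtain r Q where "R = r # Q" "length Q = Suc m0"
        using \<open>length R = Suc m\<close> Suc by (cases R) auto
      with card_outcome_Cons[OF count_outcome count_merge] \<open>independent_arms R\<close> show ?thesis
        unfolding Suc by blast
    qed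
    moreover have "card {(x, S). merge Q x S} = ternary m" if "independent_arms Q" "length Q = Suc m" for Q
      using card_merge[OF count_outcome count_merge that(1)] that(2) unfolding Suc by blast
    ultimately show ?thesis
      by blast
  qed
qed

theorem theorem2:
  fixes n :: nat
  assumes "n \<ge> 1"
  shows "real (pbs_count n) = real ((3*n - 3) choose (n - 1)) / real (2*n - 1)"
proof -
  have "independent_arms (map Pt [1..<n+1])"
    by (auto simp: independent_arms_def subterm_antichain_def distinct_map inj_on_def)
  moreover have "length (map Pt [1..<n+1]) = Suc (n - 1)"
    using assms by simp
  ultimately have "card {A. outcome (map Pt [1..<n+1]) A} = ternary (n - 1)"
    using card_outcome_and_merge[of "n - 1"] by blast
  then have "real (pbs_count n) = real ((3 * (n - 1)) choose (n - 1)) / real (2 * (n - 1) + 1)"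
    unfolding pbs_count_eq_card_outcome by (rule ssubst) (rule ternary_closed_form)
  moreover have "3 * (n - 1) = 3 * n - 3" "2 * (n - 1) + 1 = 2 * n - 1"
    using assms by auto
  ultimately show ?thesis
    by (simp only:)
qed

end
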